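(* Let $A\in\mathbb R^{n\times n}$ be Hurwitz, $B\in\mathbb R^n$, $0<P,Q\in\mathrm S^n$ with $Q=-(A^\top P+PA)$, $\mathscr b>0$ and fix $\gamma\in(0,1)$. Define, for $\alpha>0$, the convergence rate $c_{\mathrm e}(\alpha)=g(\alpha\mathscr b\gamma,Q,PB)/\lambda_{\max}(P)$. Then there exists a nonempty interval $\mathcal J=(0,\sup\mathcal J)$ on which $\alpha\mapsto c_{\mathrm e}(\alpha)$ is strictly increasing if and only if $g(1,Q,PB)>\lambda_{\min}(Q)$. Moreover, if $n\ge2$, then $c_{\mathrm e}(\alpha)\le\lambda_{\max}(Q)/\lambda_{\max}(P)$ for all $\alpha>0$; and if $g(1,Q,PB)>\lambda_{\min}(Q)$ fails, then $c_{\mathrm e}(\alpha)=\lambda_{\min}(Q)/\lambda_{\max}(P)$ for all $\alpha>0$.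
   Context: $\mathrm S^n$: real symmetric $n\times n$ matrices; $g(\phi,Q,v)=\lambda_{\min}(Q+\phi\,vv^\top)$. In the paper, $\mathscr b=\inf_x\beta(x)^\top K_{\mathrm b}\beta(x)$ and $\alpha$ scales the gain $K=\alpha K_{\mathrm b}$ of the static update law $\hat W=K\beta(e)B^\top Pe$, and $c_{\mathrm e}$ is the exponential rate in the transient bound on $\|e(t)\|$. *)

theory Defs
  imports "HOL-Analysis.Analysis"
begin

definition real_eigenvalues :: "real^'n^'n \<Rightarrow> real set" where
  "real_eigenvalues M = {l. \<exists>v. v \<noteq> 0 \<and> M *v v = l *\<^sub>R v}"

text \<open>Smallest / largest eigenvalue (used for symmetric matrices, whose eigenvalues are all real).\<close>
definition lambda_min :: "real^'n^'n \<Rightarrow> real" where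
  "lambda_min M = Inf (real_eigenvalues M)"

definition lambda_max :: "real^'n^'n \<Rightarrow> real" where
  "lambda_max M = Sup (real_eigenvalues M)"

definition symmetric_matrix :: "real^'n^'n \<Rightarrow> bool" where
  "symmetric_matrix M \<longleftrightarrow> transpose M = M"

definition pos_def :: "real^'n^'n \<Rightarrow> bool" where
  "pos_def M \<longleftrightarrow> symmetric_matrix M \<and> (\<forall>x. x \<noteq> 0 \<longrightarrow> x \<bullet> (M *v x) > 0)"

definition hurwitz :: "real^'n^'n \<Rightarrow> bool" where
  "hurwitz A \<longleftrightarrow> (\<forall>l::complex. (\<exists>v::complex^'n. v \<noteq> 0 \<and>
        (\<chi> i j. complex_of_real (A $ i $ j)) *v v = l *s v) \<longrightarrow> Re l < 0)"

definition outer :: "real^'n \<Rightarrow> real^'n^'n" where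
  "outer v = (\<chi> i j. v $ i * v $ j)"

definition g :: "real \<Rightarrow> real^'n^'n \<Rightarrow> real^'n \<Rightarrow> real" where
  "g phi Q v = lambda_min (Q + phi *\<^sub>R outer v)"

end

theory Submission
  imports Defs
begin

text \<open>
  Since \<open>Q + \<phi> v v\<^sup>T\<close> is symmetric, \<open>g \<phi> Q v\<close> is the minimum over unit vectors \<open>x\<close> of the
  affine functions \<open>\<phi> \<mapsto> x\<^sup>T Q x + \<phi> (x \<bullet> v)\<^sup>2\<close>, all nondecreasing. Hence \<open>g\<close> is nondecreasing
  in \<open>\<phi>\<close>, lies below \<open>\<lambda>\<^sub>m\<^sub>i\<^sub>n(Q) + \<phi> w\<close> for some \<open>w \<ge> 0\<close>, and once it is constant on a
  nondegenerate interval \<open>[a, b]\<close> the minimiser at \<open>b\<close> is orthogonal to \<open>v\<close>, so \<open>g\<close> stays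
  constant on \<open>[b, \<infinity>)\<close>. Consequently \<open>g\<close> either is constantly \<open>\<lambda>\<^sub>m\<^sub>i\<^sub>n(Q)\<close> on \<open>[0, \<infinity>)\<close>, or
  \<open>g 1 > g 0\<close> and it is strictly increasing on \<open>(0, s)\<close> for small \<open>s\<close>, since flatness
  inside \<open>(0, s)\<close> would give \<open>g 1 \<le> g 0 + s w\<close>. In dimension \<open>n \<ge> 2\<close> a unit vector
  orthogonal to \<open>v\<close> shows \<open>g \<phi> Q v \<le> \<lambda>\<^sub>m\<^sub>a\<^sub>x(Q)\<close>.
\<close>

lemma symmetric_matrix_inner_commute:
  assumes "symmetric_matrix M"
  shows "x \<bullet> (M *v y) = y \<bullet> (M *v x)"
proof -
  have "x \<bullet> (M *v y) = (x v* M) \<bullet> y" by (simp add: dot_lmul_matrix)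
  also have "x v* M = M *v x" using assms unfolding symmetric_matrix_def
    by (metis vector_transpose_matrix)
  finally show ?thesis by (simp add: inner_commute)
qed

lemma psd_quadratic_form_zero_imp_kernel:
  fixes N :: "real^'n^'n"
  assumes sym: "symmetric_matrix N" and psd: "\<And>y. 0 \<le> y \<bullet> (N *v y)"
    and zero: "x \<bullet> (N *v x) = 0"
  shows "N *v x = 0"
proof -
  define y where "y = N *v x"
  define c where "c = y \<bullet> y"
  define d where "d = y \<bullet> (N *v y)"
  have "d \<ge> 0" using psd d_def by simp
  have quadratic: "0 \<le> 2 * t * c + t\<^sup>2 * d" for t
  proof -
    have "0 \<le> (x + t *\<^sub>R y) \<bullet> (N *v (x + t *\<^sub>R y))" by (rule psd)
    also have "\<dots> = x \<bullet> (N *v x) + t * (x \<bullet> (N *v y)) + t * (y \<bullet> (N *v x)) + t\<^sup>2 * d"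
      by (simp add: matrix_vector_right_distrib matrix_vector_mult_scaleR inner_add_left
          inner_add_right d_def power2_eq_square algebra_simps)
    also have "\<dots> = 2 * t * c + t\<^sup>2 * d"
      using zero symmetric_matrix_inner_commute[OF sym, of x y] by (simp add: c_def y_def)
    finally show ?thesis .
  qed
  have "c = 0"
  proof (rule ccontr)
    assume "c \<noteq> 0"
    define t where "t = - c / (d + 1)"
    have "2 * t * c + t\<^sup>2 * d = c\<^sup>2 / (d + 1) * (d / (d + 1) - 2)"
      using \<open>d \<ge> 0\<close> unfolding t_def by (simp add: divide_simps power2_eq_square) (simp add: algebra_simps)
    also have "\<dots> < 0"
      using \<open>c \<noteq> 0\<close> \<open>d \<ge> 0\<close> by (intro mult_pos_neg) (auto simp: divide_simps)
    finally show False using quadratic[of t] by simp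
  qed
  then show ?thesis unfolding c_def y_def by simp
qed

text \<open>A minimiser of the Rayleigh quotient on the unit sphere is an eigenvector: the shifted
  matrix \<open>M - m I\<close> is positive semidefinite and its quadratic form vanishes at the minimiser.\<close>

lemma symmetric_matrix_min_eigenpair:
  fixes M :: "real^'n^'n"
  assumes sym: "symmetric_matrix M"
  obtains x0 m where "norm x0 = 1" "M *v x0 = m *\<^sub>R x0" "\<And>x. m * (x \<bullet> x) \<le> x \<bullet> (M *v x)"
proof -
  let ?f = "\<lambda>x::real^'n. x \<bullet> (M *v x)"
  have "sphere (0::real^'n) 1 \<noteq> {}" by (simp add: sphere_def) (metis norm_axis_1)
  moreover have "continuous_on (sphere 0 1) ?f"
    by (intro continuous_intros)
  ultimately obtain x0 where x0: "norm x0 = 1" and min: "\<And>y. norm y = 1 \<Longrightarrow> ?f x0 \<le> ?f y"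
    using continuous_attains_inf[of "sphere 0 1" ?f] by auto
  define m where "m = ?f x0"
  have lower: "m * (x \<bullet> x) \<le> ?f x" for x
  proof (cases "x = 0")
    case False
    have "m \<le> ?f ((1 / norm x) *\<^sub>R x)" unfolding m_def by (rule min) (use False in simp)
    also have "\<dots> = (1 / norm x)\<^sup>2 * ?f x" by (simp add: matrix_vector_mult_scaleR power2_eq_square)
    finally have "m \<le> (1 / norm x)\<^sup>2 * ?f x" .
    then have "m * (norm x)\<^sup>2 \<le> ?f x" using False by (simp add: field_simps)
    then show ?thesis by (simp add: power2_norm_eq_inner)
  qed simp
  define N where "N = M - m *\<^sub>R mat 1"
  have N_mult: "N *v x = M *v x - m *\<^sub>R x" for x
    by (simp add: N_def matrix_vector_mult_diff_rdistrib scaleR_matrix_vector_assoc[symmetric])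
  have "symmetric_matrix N" using sym unfolding symmetric_matrix_def N_def
    by (simp add: vec_eq_iff transpose_def mat_def)
  then have "N *v x0 = 0"
  proof (rule psd_quadratic_form_zero_imp_kernel)
    show "0 \<le> y \<bullet> (N *v y)" for y using lower[of y] by (simp add: N_mult inner_diff_right)
    show "x0 \<bullet> (N *v x0) = 0"
      using x0 by (simp add: N_mult inner_diff_right m_def power2_norm_eq_inner[symmetric])
  qed
  then have "M *v x0 = m *\<^sub>R x0" by (simp add: N_mult)
  then show ?thesis using x0 lower that by blast
qed

lemma lambda_min_eq_rayleigh_min:
  assumes "x0 \<noteq> 0" "M *v x0 = m *\<^sub>R x0" "\<And>x. m * (x \<bullet> x) \<le> x \<bullet> (M *v x)"
  shows "lambda_min M = m"
  unfolding lambda_min_def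
proof (rule cInf_eq_minimum)
  show "m \<in> real_eigenvalues M"
    unfolding real_eigenvalues_def using assms(1,2) by blast
next
  fix l assume "l \<in> real_eigenvalues M"
  then obtain v where v: "v \<noteq> 0" "M *v v = l *\<^sub>R v" unfolding real_eigenvalues_def by blast
  have "m * (v \<bullet> v) \<le> l * (v \<bullet> v)" using assms(3)[of v] v(2) by simp
  then show "m \<le> l" using v(1) by simp
qed

lemma lambda_min_le_rayleigh:
  assumes "symmetric_matrix M"
  shows "lambda_min M * (x \<bullet> x) \<le> x \<bullet> (M *v x)"
  by (metis assms symmetric_matrix_min_eigenpair lambda_min_eq_rayleigh_min norm_zero zero_neq_one)

lemma lambda_min_attained:
  assumes "symmetric_matrix M"
  obtains x where "norm x = 1" "x \<bullet> (M *v x) = lambda_min M"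
proof -
  obtain x0 m where x0: "norm x0 = 1" "M *v x0 = m *\<^sub>R x0" "\<And>x. m * (x \<bullet> x) \<le> x \<bullet> (M *v x)"
    using symmetric_matrix_min_eigenpair[OF assms] by blast
  have "x0 \<bullet> (M *v x0) = m" using x0(1,2) by (simp add: power2_norm_eq_inner[symmetric])
  then show ?thesis using that x0(1) lambda_min_eq_rayleigh_min[OF _ x0(2,3)] by force
qed

lemma lambda_max_eq_rayleigh_max:
  assumes "x0 \<noteq> 0" "M *v x0 = m *\<^sub>R x0" "\<And>x. x \<bullet> (M *v x) \<le> m * (x \<bullet> x)"
  shows "lambda_max M = m"
  unfolding lambda_max_def
proof (rule cSup_eq_maximum)
  show "m \<in> real_eigenvalues M"
    unfolding real_eigenvalues_def using assms(1,2) by blast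
next
  fix l assume "l \<in> real_eigenvalues M"
  then obtain v where v: "v \<noteq> 0" "M *v v = l *\<^sub>R v" unfolding real_eigenvalues_def by blast
  have "l * (v \<bullet> v) \<le> m * (v \<bullet> v)" using assms(3)[of v] v(2) by simp
  then show "l \<le> m" using v(1) by simp
qed

lemma rayleigh_le_lambda_max:
  assumes "symmetric_matrix M"
  shows "x \<bullet> (M *v x) \<le> lambda_max M * (x \<bullet> x)"
proof -
  have neg: "(- M) *v y = - (M *v y)" for y
    by (simp add: vec_eq_iff matrix_vector_mult_def sum_negf)
  have "symmetric_matrix (- M)" using assms unfolding symmetric_matrix_def
    by (simp add: vec_eq_iff transpose_def)
  then obtain x0 m where x0: "norm x0 = 1" "(- M) *v x0 = m *\<^sub>R x0"
    and lower: "\<And>x. m * (x \<bullet> x) \<le> x \<bullet> ((- M) *v x)"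
    using symmetric_matrix_min_eigenpair by blast
  have upper: "y \<bullet> (M *v y) \<le> (- m) * (y \<bullet> y)" for y using lower[of y] by (simp add: neg)
  have "x0 \<noteq> 0" using x0(1) by auto
  moreover have "M *v x0 = (- m) *\<^sub>R x0" using x0(2) unfolding neg scaleR_minus_left by (metis minus_minus)
  ultimately have "lambda_max M = - m" using upper by (rule lambda_max_eq_rayleigh_max)
  then show ?thesis using upper by simp
qed

lemma pos_def_lambda_max_pos:
  fixes P :: "real^'n^'n"
  assumes "pos_def P"
  shows "lambda_max P > 0"
proof -
  let ?x = "axis undefined 1 :: real^'n"
  have "0 < ?x \<bullet> (P *v ?x)" using assms unfolding pos_def_def by (simp add: axis_eq_0_iff)
  also have "\<dots> \<le> lambda_max P * (?x \<bullet> ?x)"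
    using assms unfolding pos_def_def by (intro rayleigh_le_lambda_max) auto
  finally show ?thesis by (simp add: inner_axis_axis)
qed

lemma outer_mult_vector: "outer v *v x = (v \<bullet> x) *\<^sub>R v"
  by (simp add: vec_eq_iff outer_def matrix_vector_mult_def inner_vec_def sum_distrib_left
      mult.commute mult.left_commute)

lemma symmetric_matrix_add_outer:
  "symmetric_matrix Q \<Longrightarrow> symmetric_matrix (Q + \<phi> *\<^sub>R outer v)"
  unfolding symmetric_matrix_def by (simp add: vec_eq_iff transpose_def outer_def mult.commute)

lemma quadratic_form_add_outer:
  "x \<bullet> ((Q + \<phi> *\<^sub>R outer v) *v x) = x \<bullet> (Q *v x) + \<phi> * (x \<bullet> v)\<^sup>2"
  by (simp add: matrix_vector_mult_add_rdistrib scaleR_matrix_vector_assoc[symmetric]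
      outer_mult_vector inner_add_right power2_eq_square inner_commute)

lemma g_zero: "g 0 Q v = lambda_min Q"
  by (simp add: g_def)

lemma g_le_quadratic_form:
  assumes "symmetric_matrix Q" "norm x = 1"
  shows "g \<phi> Q v \<le> x \<bullet> (Q *v x) + \<phi> * (x \<bullet> v)\<^sup>2"
  using lambda_min_le_rayleigh[OF symmetric_matrix_add_outer[OF assms(1)], of \<phi> v x] assms(2)
  by (simp add: g_def quadratic_form_add_outer power2_norm_eq_inner[symmetric])

lemma g_attained:
  assumes "symmetric_matrix Q"
  obtains x where "norm x = 1" "g \<phi> Q v = x \<bullet> (Q *v x) + \<phi> * (x \<bullet> v)\<^sup>2"
  using lambda_min_attained[OF symmetric_matrix_add_outer[OF assms], of \<phi> v]
  by (metis g_def quadratic_form_add_outer)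

lemma g_mono:
  assumes "symmetric_matrix Q"
  shows "mono (\<lambda>\<phi>. g \<phi> Q v)"
proof
  fix a b :: real assume "a \<le> b"
  obtain x where x: "norm x = 1" "g b Q v = x \<bullet> (Q *v x) + b * (x \<bullet> v)\<^sup>2"
    using g_attained[OF assms] by blast
  have "g a Q v \<le> x \<bullet> (Q *v x) + a * (x \<bullet> v)\<^sup>2" by (rule g_le_quadratic_form[OF assms x(1)])
  also have "\<dots> \<le> g b Q v" using x(2) \<open>a \<le> b\<close> by (simp add: mult_right_mono)
  finally show "g a Q v \<le> g b Q v" .
qed

lemma g_constant_after_flat:
  assumes "symmetric_matrix Q" "a < b" "g a Q v = g b Q v" "b \<le> c"
  shows "g c Q v = g b Q v"
proof -
  obtain x where x: "norm x = 1" "g b Q v = x \<bullet> (Q *v x) + b * (x \<bullet> v)\<^sup>2"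
    using g_attained[OF assms(1)] by blast
  have "g a Q v \<le> x \<bullet> (Q *v x) + a * (x \<bullet> v)\<^sup>2" by (rule g_le_quadratic_form[OF assms(1) x(1)])
  then have "(b - a) * (x \<bullet> v)\<^sup>2 \<le> 0" using x(2) assms(3) by (simp add: algebra_simps)
  then have "x \<bullet> v = 0" using assms(2) by (smt (verit) mult_pos_pos zero_less_power2)
  then have "g c Q v \<le> g b Q v" using g_le_quadratic_form[OF assms(1) x(1), of c v] x(2) by simp
  moreover have "g b Q v \<le> g c Q v" using g_mono[OF assms(1)] assms(4) by (simp add: mono_def)
  ultimately show ?thesis by simp
qed

lemma g_le_linear_bound:
  assumes "symmetric_matrix Q"
  obtains w where "w \<ge> 0" "\<And>\<phi>. g \<phi> Q v \<le> lambda_min Q + \<phi> * w"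
proof -
  obtain x where x: "norm x = 1" "g 0 Q v = x \<bullet> (Q *v x) + 0 * (x \<bullet> v)\<^sup>2"
    using g_attained[OF assms] by blast
  show ?thesis
    using that[of "(x \<bullet> v)\<^sup>2"] g_le_quadratic_form[OF assms x(1)] x(2) by (simp add: g_zero)
qed

lemma g_eq_lambda_min_if_not_increasing:
  assumes "symmetric_matrix Q" "\<not> g 1 Q v > lambda_min Q" "\<phi> \<ge> 0"
  shows "g \<phi> Q v = lambda_min Q"
proof -
  have mono: "a \<le> b \<Longrightarrow> g a Q v \<le> g b Q v" for a b using g_mono[OF assms(1)] by (simp add: mono_def)
  have flat: "g 1 Q v = g 0 Q v" using assms(2) mono[of 0 1] by (simp add: g_zero)
  show ?thesis
  proof (cases "\<phi> \<ge> 1")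
    case True
    then show ?thesis using g_constant_after_flat[OF assms(1) _ flat[symmetric]] flat by (simp add: g_zero)
  next
    case False
    then show ?thesis using mono[of 0 \<phi>] mono[of \<phi> 1] flat assms(3) by (simp add: g_zero)
  qed
qed

lemma g_strict_mono_near_zero:
  assumes "symmetric_matrix Q" "g 1 Q v > lambda_min Q"
  obtains s where "s > 0" "strict_mono_on {0<..<s} (\<lambda>\<phi>. g \<phi> Q v)"
proof -
  define d where "d = g 1 Q v - lambda_min Q"
  obtain w where w: "w \<ge> 0" "\<And>\<phi>. g \<phi> Q v \<le> lambda_min Q + \<phi> * w"
    using g_le_linear_bound[OF assms(1)] by blast
  define s where "s = min 1 (d / (w + 1))"
  have "d > 0" using assms(2) d_def by simp
  then have "s > 0" using w(1) by (simp add: s_def)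
  have "s * w \<le> d / (w + 1) * w" using w(1) by (intro mult_right_mono) (auto simp: s_def)
  also have "\<dots> < d" using \<open>d > 0\<close> w(1) by (simp add: field_simps)
  finally have "s * w < d" .
  have increasing: "g a Q v < g b Q v" if "0 < a" "a < b" "b < s" for a b
  proof (rule ccontr)
    assume "\<not> g a Q v < g b Q v"
    then have flat: "g a Q v = g b Q v"
      using g_mono[OF assms(1)] \<open>a < b\<close> by (simp add: mono_def order_less_imp_le eq_iff)
    have "g 1 Q v = g a Q v"
      using g_constant_after_flat[OF assms(1) \<open>a < b\<close> flat, of 1] flat \<open>b < s\<close> by (simp add: s_def)
    also have "\<dots> \<le> lambda_min Q + s * w"
      using w(2)[of a] mult_right_mono[of a s w] that w(1) by simp
    finally show False using \<open>s * w < d\<close> d_def by simp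
  qed
  have "strict_mono_on {0<..<s} (\<lambda>\<phi>. g \<phi> Q v)"
    by (rule strict_mono_onI) (use increasing in auto)
  with \<open>s > 0\<close> show ?thesis by (rule that)
qed

lemma g_le_lambda_max:
  fixes v :: "real^'n"
  assumes "symmetric_matrix Q" "CARD('n) \<ge> 2"
  shows "g \<phi> Q v \<le> lambda_max Q"
proof -
  obtain y where "y \<noteq> 0" "orthogonal v y"
    using orthogonal_to_vector_exists[of v] assms(2) by auto
  define x where "x = (1 / norm y) *\<^sub>R y"
  have x: "norm x = 1" "x \<bullet> v = 0"
    using \<open>y \<noteq> 0\<close> \<open>orthogonal v y\<close> by (auto simp: x_def orthogonal_def inner_commute)
  have "g \<phi> Q v \<le> x \<bullet> (Q *v x)" using g_le_quadratic_form[OF assms(1) x(1), of \<phi> v] x(2) by simp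
  also have "\<dots> \<le> lambda_max Q"
    using rayleigh_le_lambda_max[OF assms(1), of x] x(1) by (simp add: power2_norm_eq_inner[symmetric])
  finally show ?thesis .
qed

theorem corollary1:
  fixes A P Q :: "real^'n^'n" and B :: "real^'n" and bb \<gamma> :: real
    and ce :: "real \<Rightarrow> real"
  assumes "hurwitz A"
    and "pos_def P" and "pos_def Q"
    and "Q = - (transpose A ** P + P ** A)"
    and "bb > 0"
    and "0 < \<gamma>" and "\<gamma> < 1"
    and "\<And>\<alpha>. ce \<alpha> = g (\<alpha> * bb * \<gamma>) Q (P *v B) / lambda_max P"
  shows "((\<exists>s>0. strict_mono_on {0<..<s} ce) \<longleftrightarrow> g 1 Q (P *v B) > lambda_min Q)
    \<and> (CARD('n) \<ge> 2 \<longrightarrow> (\<forall>\<alpha>>0. ce \<alpha> \<le> lambda_max Q / lambda_max P))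
    \<and> (\<not> (g 1 Q (P *v B) > lambda_min Q) \<longrightarrow>
         (\<forall>\<alpha>>0. ce \<alpha> = lambda_min Q / lambda_max P))"
proof -
  define k where "k = bb * \<gamma>"
  have sym: "symmetric_matrix Q" using assms(3) unfolding pos_def_def by simp
  have "k > 0" using assms(5,6) by (simp add: k_def)
  have L: "lambda_max P > 0" by (rule pos_def_lambda_max_pos[OF assms(2)])
  have ce_eq: "ce \<alpha> = g (k * \<alpha>) Q (P *v B) / lambda_max P" for \<alpha>
    using assms(8)[of \<alpha>] by (simp add: k_def mult_ac)
  have ce_flat: "\<forall>\<alpha>>0. ce \<alpha> = lambda_min Q / lambda_max P" if "\<not> g 1 Q (P *v B) > lambda_min Q"
    using g_eq_lambda_min_if_not_increasing[OF sym that] \<open>k > 0\<close> by (simp add: ce_eq)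
  have scaled: "strict_mono_on {0<..<s / k} ce" if "strict_mono_on {0<..<s} (\<lambda>\<phi>. g \<phi> Q (P *v B))" for s
    using \<open>k > 0\<close> L
    by (intro strict_mono_onI) (auto simp: ce_eq field_simps intro!: strict_mono_onD[OF that])
  have "(\<exists>s>0. strict_mono_on {0<..<s} ce) \<longleftrightarrow> g 1 Q (P *v B) > lambda_min Q"
  proof
    assume "\<exists>s>0. strict_mono_on {0<..<s} ce"
    then obtain s where s: "s > 0" "strict_mono_on {0<..<s} ce" by blast
    then have "ce (s / 3) < ce (2 * s / 3)" by (intro strict_mono_onD[OF s(2)]) auto
    then show "g 1 Q (P *v B) > lambda_min Q" using ce_flat s(1) by force
  next
    assume "g 1 Q (P *v B) > lambda_min Q"
    then obtain s where s: "s > 0" "strict_mono_on {0<..<s} (\<lambda>\<phi>. g \<phi> Q (P *v B))"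
      by (rule g_strict_mono_near_zero[OF sym])
    show "\<exists>s>0. strict_mono_on {0<..<s} ce"
      using scaled[OF s(2)] s(1) \<open>k > 0\<close> by (intro exI[of _ "s / k"]) auto
  qed
  moreover have "ce \<alpha> \<le> lambda_max Q / lambda_max P" if "CARD('n) \<ge> 2" for \<alpha>
    using g_le_lambda_max[OF sym that] L by (simp add: ce_eq divide_right_mono)
  ultimately show ?thesis using ce_flat by blast
qed

end
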